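(* Let $J\ge p\ge 1$, $\sigma_\varepsilon^2>0$, $I>0$, let $\mathbf{\Sigma}_\gamma$ be a nonnegative definite symmetric $J\times J$ matrix, and let $\mathbf{A}_{\bm\beta}$ be a real $J\times p$ matrix of full column rank $p$. For an approximate design $\xi=(I_1,\dots,I_J)$ (reals $I_j\ge0$, $\sum_jI_j=I$) put $\mathbf{M}_0(\xi)=\mathrm{diag}(I_1,\dots,I_J)$, $\mathbf{M}_0(\xi)^{1/2}=\mathrm{diag}(\sqrt{I_1},\dots,\sqrt{I_J})$, $$\mathbf{M}_{\bm\beta}(\xi)=\mathbf{A}_{\bm\beta}^{\mathrm T}\mathbf{M}_0(\xi)^{1/2}\big(\sigma_\varepsilon^2\mathbf{I}_J+\mathbf{M}_0(\xi)^{1/2}\mathbf{\Sigma}_\gamma\mathbf{M}_0(\xi)^{1/2}\big)^{-1}\mathbf{M}_0(\xi)^{1/2}\mathbf{A}_{\bm\beta},$$ and let $\psi_j(\xi)$ be the $j$th diagonal entry of $\big(\sigma_\varepsilon^2\mathbf{I}_J+\mathbf{\Sigma}_\gamma\mathbf{M}_0(\xi)\big)^{-1}\mathbf{A}_{\bm\beta}\mathbf{M}_{\bm\beta}(\xi)^{-1}\mathbf{A}_{\bm\beta}^{\mathrm T}\big(\sigma_\varepsilon^2\mathbf{I}_J+\mathbf{M}_0(\xi)\mathbf{\Sigma}_\gamma\big)^{-1}$. Let $\xi^*=(I_1^*,\dots,I_J^* )$ be fully supported, i.e. $I_j^*>0$ for all $j$. Then $\xi^*$ is locally $D$-optimal if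 and only if the values $I\psi_j(\xi^* )$, $j=1,\dots,J$, are all equal.
   Context: $\mathbf{A}_{\bm\beta}$ is the Jacobian of the mean response curve at a fixed nominal parameter $\bm\beta\in\mathbb{R}^p$ over $J$ fixed time points. $\bm\beta$ is estimable under $\xi$ if $\mathbf{A}_{\bm\beta}$ has full column rank $p$ and its columns lie in the column space of $\mathbf{M}_0(\xi)$. A design $\xi^*$ is locally $D$-optimal if $\log\det\mathbf{M}_{\bm\beta}(\xi^* )\ge\log\det\mathbf{M}_{\bm\beta}(\xi)$ for all approximate designs $\xi$ with total $I$ under which $\bm\beta$ is estimable. *)

theory Defs
  imports "HOL-Analysis.Analysis"
begin

text \<open>Time points are indexed by the finite type 'j (J = CARD('j)),
parameters by the finite type 'p (p = CARD('p)).
An approximate design is a vector xi of weights I_1..I_J.\<close>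

definition diag_mat :: "real^'j \<Rightarrow> real^'j^'j" where
  "diag_mat v = (\<chi> i k. if i = k then v $ i else 0)"

definition M0 :: "real^'j \<Rightarrow> real^'j^'j" where
  "M0 xi = diag_mat xi"

definition M0_sqrt :: "real^'j \<Rightarrow> real^'j^'j" where
  "M0_sqrt xi = diag_mat (\<chi> i. sqrt (xi $ i))"

definition is_design :: "real \<Rightarrow> real^'j \<Rightarrow> bool" where
  "is_design I xi \<longleftrightarrow> (\<forall>j. xi $ j \<ge> 0) \<and> (\<Sum>j\<in>UNIV. xi $ j) = I"

definition M_beta :: "real \<Rightarrow> real^'j^'j \<Rightarrow> real^'p^'j \<Rightarrow> real^'j \<Rightarrow> real^'p^'p" where
  "M_beta s2 Sig A xi =
     transpose A ** M0_sqrt xi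
       ** matrix_inv (s2 *\<^sub>R mat 1 + M0_sqrt xi ** Sig ** M0_sqrt xi)
       ** M0_sqrt xi ** A"

definition psi :: "real \<Rightarrow> real^'j^'j \<Rightarrow> real^'p^'j \<Rightarrow> real^'j \<Rightarrow> 'j \<Rightarrow> real" where
  "psi s2 Sig A xi j =
     (matrix_inv (s2 *\<^sub>R mat 1 + Sig ** M0 xi) ** A ** matrix_inv (M_beta s2 Sig A xi)
        ** transpose A ** matrix_inv (s2 *\<^sub>R mat 1 + M0 xi ** Sig)) $ j $ j"

definition estimable :: "real^'p^'j \<Rightarrow> real^'j \<Rightarrow> bool" where
  "estimable A xi \<longleftrightarrow> rank A = CARD('p) \<and> columns A \<subseteq> span (columns (M0 xi))"

definition locally_D_optimal ::
  "real \<Rightarrow> real^'j^'j \<Rightarrow> real^'p^'j \<Rightarrow> real \<Rightarrow> real^'j \<Rightarrow> bool" where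
  "locally_D_optimal s2 Sig A I xs \<longleftrightarrow>
     is_design I xs \<and> estimable A xs \<and>
     (\<forall>xi. is_design I xi \<and> estimable A xi \<longrightarrow>
        ln (det (M_beta s2 Sig A xs)) \<ge> ln (det (M_beta s2 Sig A xi)))"

end

theory Submission
  imports Defs
begin

text \<open>
  With D = M0(xi)^(1/2), the information matrix is M(xi) = A^T W(xi) A for the weight matrix
  W(xi) = D (s2 I + D Sig D)^-1 D. Completing two squares shows that W lies below its tangent in the
  Loewner order: W(xi) \<le> W(xi0) + C^-T diag(s2 (xi - xi0)) C^-1 with C = s2 I + Sig M0(xi0).
  Simultaneous diagonalisation and t \<le> exp (t - 1) turn a Loewner bound P \<le> X + Q into
  det P \<le> det X exp (tr (X^-1 Q)), and here the trace is s2 \<Sum>j (xi_j - xi0_j) psi_j(xi0). So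
  det M(xi) \<le> det M(xi0) exp (s2 \<Sum>j (xi_j - xi0_j) psi_j(xi0)).
  If psi(xs) is constant, the exponent vanishes for all designs of the same total, so xs is optimal.
  Conversely, the bound applied at the design obtained from an optimal xs by moving mass t from
  point k to point j gives psi_j \<le> psi_k there; letting t \<rightarrow> 0 and using continuity of psi
  gives psi_j(xs) \<le> psi_k(xs).
\<close>

section \<open>Matrix inverses and quadratic forms\<close>

lemma matrix_inv_unique:
  fixes A B :: "real^'n^'n"
  assumes "A ** B = mat 1"
  shows "matrix_inv A = B"
proof -
  have "A ** B = mat 1 \<and> B ** A = mat 1"
    using assms matrix_left_right_inverse by blast
  moreover have "A' = B" if "A ** A' = mat 1 \<and> A' ** A = mat 1" for A'
    by (metis assms that matrix_mul_assoc matrix_mul_lid)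
  ultimately show ?thesis
    unfolding matrix_inv_def by blast
qed

lemma
  fixes A :: "real^'n^'n"
  assumes "invertible A"
  shows matrix_inv_right: "A ** matrix_inv A = mat 1"
    and matrix_inv_left: "matrix_inv A ** A = mat 1"
  using assms matrix_inv_unique unfolding invertible_def by metis+

lemma
  fixes A :: "real^'n^'n"
  assumes "invertible A"
  shows matrix_inv_vector_cancel: "matrix_inv A *v (A *v x) = x" "A *v (matrix_inv A *v x) = x"
  by (simp_all add: matrix_vector_mul_assoc matrix_inv_left[OF assms] matrix_inv_right[OF assms])

lemma invertible_if_inj:
  fixes A :: "real^'n^'n"
  assumes "inj ((*v) A)"
  shows "invertible A"
  using assms matrix_left_invertible_injective matrix_left_right_inverse
  unfolding invertible_def by metis

lemma matrix_inv_transpose: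
  fixes A :: "real^'n^'n"
  assumes "invertible A"
  shows "matrix_inv (transpose A) = transpose (matrix_inv A)"
  by (rule matrix_inv_unique)
     (simp add: matrix_transpose_mul[symmetric] matrix_inv_left[OF assms])

lemma transpose_add: "transpose (A + B) = transpose A + transpose (B :: 'a::semiring_1^'n^'m)"
  by (simp add: transpose_def vec_eq_iff)

lemma matrix_add_rdistrib: "(A + B) ** C = A ** C + B ** (C :: 'a::semiring_1^'p^'n)"
  by (simp add: matrix_matrix_mult_def vec_eq_iff sum.distrib distrib_right)

lemma scaleR_mat_one_vector: "(c *\<^sub>R mat 1) *v x = c *\<^sub>R (x :: real^'n)"
  by (simp add: vec_eq_iff matrix_vector_mult_def mat_def if_distrib if_distribR cong: if_cong)

lemma inner_transpose_vector: "u \<bullet> (transpose A *v v) = (A *v u) \<bullet> (v :: real^'n)"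
  by (metis dot_lmul_matrix inner_commute transpose_matrix_vector)

lemma symmetric_form_commute:
  fixes X :: "real^'n^'n"
  assumes "transpose X = X"
  shows "u \<bullet> (X *v v) = v \<bullet> (X *v u)"
  by (metis assms inner_commute inner_transpose_vector)

lemma symmetric_form_add_scaleR:
  fixes X :: "real^'n^'n"
  assumes "transpose X = X"
  shows "(v + e *\<^sub>R w) \<bullet> (X *v (v + e *\<^sub>R w)) =
     v \<bullet> (X *v v) + 2 * e * (w \<bullet> (X *v v)) + e\<^sup>2 * (w \<bullet> (X *v w))"
  using symmetric_form_commute[OF assms, of v w]
  by (simp add: power2_eq_square algebra_simps)

lemma transpose_mult_entry:
  fixes F :: "real^'m^'n" and Y :: "real^'n^'n"
  shows "(transpose F ** Y ** F) $ i $ k = column i F \<bullet> (Y *v column k F)"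
proof -
  have "(transpose F ** Y ** F) $ i $ k = (\<Sum>l\<in>UNIV. \<Sum>m\<in>UNIV. F$m$i * Y$m$l * F$l$k)"
    by (simp add: matrix_matrix_mult_def transpose_def sum_distrib_right)
  also have "\<dots> = (\<Sum>m\<in>UNIV. \<Sum>l\<in>UNIV. F$m$i * Y$m$l * F$l$k)"
    by (rule sum.swap)
  finally show ?thesis
    by (simp add: column_def matrix_vector_mult_def inner_vec_def sum_distrib_left mult_ac)
qed

lemma quadratic_form_congruence:
  fixes A :: "real^'m^'n" and Y :: "real^'n^'n"
  shows "u \<bullet> ((transpose A ** Y ** A) *v u) = (A *v u) \<bullet> (Y *v (A *v u))"
  by (simp add: matrix_vector_mul_assoc[symmetric] inner_transpose_vector del: transpose_matrix_vector)

section \<open>Positive definite matrices\<close>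

definition posdef :: "real^'n^'n \<Rightarrow> bool" where
  "posdef X \<longleftrightarrow> transpose X = X \<and> (\<forall>u. u \<noteq> 0 \<longrightarrow> u \<bullet> (X *v u) > 0)"

lemma linear_le_quadratic_imp_zero:
  fixes a K :: real
  assumes "\<And>e. e * a \<le> e\<^sup>2 * K"
  shows "a = 0"
proof (rule ccontr)
  assume "a \<noteq> 0"
  define d where "d = \<bar>K\<bar> + 1"
  have d: "d > 0" "K < d"
    by (simp_all add: d_def add_pos_nonneg)
  have "a / d * a * d\<^sup>2 \<le> (a / d)\<^sup>2 * K * d\<^sup>2"
    by (rule mult_right_mono[OF assms]) simp
  hence "a\<^sup>2 * d \<le> a\<^sup>2 * K"
    using d by (simp add: power2_eq_square field_simps)
  moreover have "a\<^sup>2 * K < a\<^sup>2 * d"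
    using d \<open>a \<noteq> 0\<close> by simp
  ultimately show False by simp
qed

lemma rayleigh_quotient_stationary:
  fixes X P :: "real^'n^'n"
  assumes X: "posdef X" and P: "transpose P = P" and V: "subspace V" and v: "v \<in> V" "v \<noteq> 0"
    and max: "\<And>u. u \<in> V \<Longrightarrow> u \<noteq> 0 \<Longrightarrow>
      (u \<bullet> (P *v u)) / (u \<bullet> (X *v u)) \<le> (v \<bullet> (P *v v)) / (v \<bullet> (X *v v))"
    and w: "w \<in> V" "w \<bullet> (X *v v) = 0"
  shows "w \<bullet> (P *v v) = 0"
proof -
  have XS: "transpose X = X" and Xpos: "\<And>u. u \<noteq> 0 \<Longrightarrow> u \<bullet> (X *v u) > 0"
    using X by (auto simp: posdef_def)
  define c where "c = v \<bullet> (X *v v)"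
  have c_pos: "c > 0"
    unfolding c_def by (rule Xpos[OF v(2)])
  \<comment> \<open>first-order condition for the maximum along the line through v in direction w\<close>
  have "e * (2 * c * (w \<bullet> (P *v v))) \<le>
      e\<^sup>2 * ((v \<bullet> (P *v v)) * (w \<bullet> (X *v w)) - (w \<bullet> (P *v w)) * c)" for e
  proof -
    let ?u = "v + e *\<^sub>R w"
    have uX: "?u \<bullet> (X *v ?u) = c + e\<^sup>2 * (w \<bullet> (X *v w))"
      using symmetric_form_add_scaleR[OF XS] w(2) by (simp add: c_def)
    have "w \<bullet> (X *v w) \<ge> 0"
      using Xpos[of w] by (cases "w = 0") auto
    hence uX_pos: "?u \<bullet> (X *v ?u) > 0"
      using c_pos uX by (simp add: add_pos_nonneg)
    have "?u \<in> V"
      using w(1) v(1) V by (simp add: subspace_add subspace_scale)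
    moreover have "?u \<noteq> 0"
      using uX_pos by auto
    ultimately have "(?u \<bullet> (P *v ?u)) / (?u \<bullet> (X *v ?u)) \<le> (v \<bullet> (P *v v)) / c"
      unfolding c_def by (rule max)
    hence "(?u \<bullet> (P *v ?u)) * c \<le> (v \<bullet> (P *v v)) * (?u \<bullet> (X *v ?u))"
      using uX_pos c_pos by (simp add: field_simps)
    thus ?thesis
      unfolding symmetric_form_add_scaleR[OF P] uX by (simp add: algebra_simps)
  qed
  hence "2 * c * (w \<bullet> (P *v v)) = 0"
    by (rule linear_le_quadratic_imp_zero)
  thus ?thesis
    using c_pos by simp
qed

lemma rayleigh_maximizer:
  fixes X P :: "real^'n^'n"
  assumes X: "posdef X" and P: "transpose P = P" and V: "subspace V" "V \<noteq> {0}"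
  obtains v where "v \<in> V" "v \<bullet> (X *v v) = 1"
    "\<And>w. w \<in> V \<Longrightarrow> w \<bullet> (X *v v) = 0 \<Longrightarrow> w \<bullet> (P *v v) = 0"
proof -
  have Xpos: "\<And>u. u \<noteq> 0 \<Longrightarrow> u \<bullet> (X *v u) > 0"
    using X by (auto simp: posdef_def)
  define R where "R u = (u \<bullet> (P *v u)) / (u \<bullet> (X *v u))" for u :: "real^'n"
  define S where "S = V \<inter> sphere 0 1"
  have unit: "(1 / norm u) *\<^sub>R u \<in> S" if "u \<in> V" "u \<noteq> 0" for u
    using that V(1) by (simp add: S_def subspace_scale)
  have "compact S"
    unfolding S_def by (rule closed_Int_compact[OF closed_subspace[OF V(1)] compact_sphere])
  moreover obtain u where "u \<in> V" "u \<noteq> 0"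
    using V subspace_0 by blast
  hence "S \<noteq> {}"
    using unit by blast
  moreover have "continuous_on S R"
    unfolding R_def using Xpos
    by (intro continuous_intros linear_continuous_on matrix_vector_mul_linear)
       (auto simp: S_def, metis Xpos less_irrefl norm_zero zero_neq_one)
  ultimately obtain v0 where "v0 \<in> S" and v0_max: "\<And>u. u \<in> S \<Longrightarrow> R u \<le> R v0"
    using continuous_attains_sup by metis
  hence v0: "v0 \<in> V" "v0 \<noteq> 0"
    by (auto simp: S_def)
  have "R u \<le> R v0" if "u \<in> V" "u \<noteq> 0" for u
    using v0_max[OF unit[OF that]] that(2)
    by (simp add: R_def matrix_vector_mult_scaleR power2_eq_square)
  hence stationary: "w \<bullet> (P *v v0) = 0" if "w \<in> V" "w \<bullet> (X *v v0) = 0" for w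
    using rayleigh_quotient_stationary[OF X P V(1) v0 _ that] unfolding R_def by blast
  define c where "c = v0 \<bullet> (X *v v0)"
  have c_pos: "c > 0"
    unfolding c_def by (rule Xpos[OF v0(2)])
  show ?thesis
  proof
    let ?v = "(1 / sqrt c) *\<^sub>R v0"
    show "?v \<in> V"
      using v0 V(1) by (simp add: subspace_scale)
    show "?v \<bullet> (X *v ?v) = 1"
      using c_pos by (simp add: matrix_vector_mult_scaleR c_def[symmetric])
    show "w \<bullet> (P *v ?v) = 0" if "w \<in> V" "w \<bullet> (X *v ?v) = 0" for w
      using that stationary c_pos by (simp add: matrix_vector_mult_scaleR)
  qed
qed

lemma dim_subspace_inter_hyperplane:
  fixes V :: "(real^'n) set"
  assumes V: "subspace V" and v: "v \<in> V" "v \<bullet> a \<noteq> 0"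
  shows "dim {w \<in> V. w \<bullet> a = 0} + 1 = dim V"
proof -
  define H where "H = {w \<in> V. w \<bullet> a = 0}"
  have H: "subspace H"
    using V by (auto simp: H_def subspace_def inner_add_left)
  have v_notin: "v \<notin> span H"
    unfolding span_eq_iff[THEN iffD2, OF H] using v by (simp add: H_def)
  have "V \<subseteq> span (insert v H)"
  proof
    fix u assume "u \<in> V"
    define c where "c = (u \<bullet> a) / (v \<bullet> a)"
    have "u - c *\<^sub>R v \<in> H"
      using \<open>u \<in> V\<close> v V by (simp add: H_def c_def subspace_diff subspace_scale inner_diff_left)
    hence "(u - c *\<^sub>R v) + c *\<^sub>R v \<in> span (insert v H)"
      by (intro span_add span_scale) (auto intro: span_base)
    thus "u \<in> span (insert v H)" by simp
  qed
  moreover have "span (insert v H) \<subseteq> V"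
    using V v by (intro span_minimal) (auto simp: H_def)
  ultimately have "dim V = dim (insert v H)"
    by (metis dim_span subset_antisym)
  thus ?thesis
    using v_notin by (simp add: dim_insert H_def)
qed

lemma simultaneous_orthonormal_basis:
  fixes X P :: "real^'n^'n"
  assumes X: "posdef X" and P: "transpose P = P" and V: "subspace V"
  obtains B where "B \<subseteq> V" "finite B" "card B = dim V" "\<forall>b\<in>B. b \<bullet> (X *v b) = 1"
    "pairwise (\<lambda>b c. b \<bullet> (X *v c) = 0 \<and> b \<bullet> (P *v c) = 0) B"
proof -
  have XS: "transpose X = X"
    using X by (simp add: posdef_def)
  have "\<exists>B. B \<subseteq> V \<and> finite B \<and> card B = n \<and> (\<forall>b\<in>B. b \<bullet> (X *v b) = 1) \<and>
      pairwise (\<lambda>b c. b \<bullet> (X *v c) = 0 \<and> b \<bullet> (P *v c) = 0) B"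
    if "subspace V" "dim V = n" for n and V :: "(real^'n) set"
    using that
  proof (induction n arbitrary: V)
    case 0
    then show ?case by (intro exI[of _ "{}"]) auto
  next
    case (Suc n)
    have "V \<noteq> {0}"
      using Suc.prems(2) by auto
    then obtain v where vV: "v \<in> V" and vX: "v \<bullet> (X *v v) = 1"
      and v_orth: "\<And>w. w \<in> V \<Longrightarrow> w \<bullet> (X *v v) = 0 \<Longrightarrow> w \<bullet> (P *v v) = 0"
      using rayleigh_maximizer[OF X P Suc.prems(1)] by metis
    define V' where "V' = {w \<in> V. w \<bullet> (X *v v) = 0}"
    have V': "subspace V'"
      using Suc.prems(1) by (auto simp: V'_def subspace_def inner_add_left)
    have "dim V' = n"
      using dim_subspace_inter_hyperplane[OF Suc.prems(1) vV] vX Suc.prems(2) by (simp add: V'_def)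
    then obtain B where B: "B \<subseteq> V'" "finite B" "card B = n" "\<forall>b\<in>B. b \<bullet> (X *v b) = 1"
      "pairwise (\<lambda>b c. b \<bullet> (X *v c) = 0 \<and> b \<bullet> (P *v c) = 0) B"
      using Suc.IH[OF V'] by blast
    have orth: "b \<bullet> (X *v v) = 0 \<and> b \<bullet> (P *v v) = 0 \<and> v \<bullet> (X *v b) = 0 \<and> v \<bullet> (P *v b) = 0"
      if "b \<in> B" for b
      using that B(1) v_orth symmetric_form_commute[OF XS, of v b] symmetric_form_commute[OF P, of v b]
      by (auto simp: V'_def)
    have "v \<notin> B"
      using B(1) vX by (auto simp: V'_def)
    show ?case
    proof (intro exI[of _ "insert v B"] conjI)
      show "insert v B \<subseteq> V"
        using B(1) vV by (auto simp: V'_def)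
      show "finite (insert v B)" "card (insert v B) = Suc n"
        using B(2,3) \<open>v \<notin> B\<close> by simp_all
      show "\<forall>b\<in>insert v B. b \<bullet> (X *v b) = 1"
        using B(4) vX by simp
      show "pairwise (\<lambda>b c. b \<bullet> (X *v c) = 0 \<and> b \<bullet> (P *v c) = 0) (insert v B)"
        using B(5) orth by (simp add: pairwise_insert)
    qed
  qed
  thus ?thesis
    using that V by blast
qed

lemma simultaneous_diagonalization:
  fixes X P :: "real^'n^'n"
  assumes "posdef X" and "transpose P = P"
  obtains F :: "real^'n^'n" where "transpose F ** X ** F = mat 1"
    "\<And>i k. i \<noteq> k \<Longrightarrow> (transpose F ** P ** F) $ i $ k = 0"
proof -
  obtain B where B: "finite B" "card B = CARD('n)" "\<forall>b\<in>B. b \<bullet> (X *v b) = 1"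
    "pairwise (\<lambda>b c. b \<bullet> (X *v c) = 0 \<and> b \<bullet> (P *v c) = 0) B"
    using simultaneous_orthonormal_basis[OF assms subspace_UNIV] by auto
  then obtain g where g: "bij_betw g (UNIV :: 'n set) B"
    using finite_same_card_bij[of "UNIV :: 'n set" B] by auto
  define F :: "real^'n^'n" where "F = (\<chi> i k. g k $ i)"
  have col: "column k F = g k" for k
    by (simp add: F_def column_def)
  have gB: "g k \<in> B" and g_inj: "i \<noteq> k \<Longrightarrow> g i \<noteq> g k" for i k
    using g by (auto simp: bij_betw_def inj_on_def)
  have "(transpose F ** X ** F) $ i $ k = mat 1 $ i $ k" for i k
    using B(3,4) gB g_inj[of i k] by (cases "i = k") (auto simp: transpose_mult_entry col mat_def pairwise_def)
  moreover have "(transpose F ** P ** F) $ i $ k = 0" if "i \<noteq> k" for i k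
    using B(4) gB g_inj[OF that] by (auto simp: transpose_mult_entry col pairwise_def)
  ultimately show ?thesis
    by (intro that) (auto simp: vec_eq_iff)
qed

lemma det_congruence:
  fixes X F P :: "real^'n^'n"
  assumes "transpose F ** X ** F = mat 1"
  shows "det P = det X * det (transpose F ** P ** F)"
proof -
  have "det F * det X * det F = 1"
    using arg_cong[OF assms, of det] by (simp add: det_mul)
  thus ?thesis
    by (simp add: det_mul algebra_simps)
qed

lemma posdef_det_pos:
  fixes X :: "real^'n^'n"
  assumes X: "posdef X"
  shows "det X > 0"
proof -
  obtain F :: "real^'n^'n" where F: "transpose F ** mat 1 ** F = mat 1"
    and diag: "\<And>i k. i \<noteq> k \<Longrightarrow> (transpose F ** X ** F) $ i $ k = 0"
    using simultaneous_diagonalization[of "mat 1" X] X by (auto simp: posdef_def)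
  have "column k F \<noteq> 0" for k
    using arg_cong[OF F, of "\<lambda>M. M $ k $ k"] by (auto simp: transpose_mult_entry mat_def)
  hence "(\<Prod>k\<in>UNIV. (transpose F ** X ** F) $ k $ k) > 0"
    using X by (intro prod_pos) (simp add: transpose_mult_entry posdef_def less_imp_le)
  thus ?thesis
    using det_congruence[OF F, of X] det_diagonal[OF diag] by simp
qed

lemma posdef_invertible: "posdef X \<Longrightarrow> invertible X"
  using posdef_det_pos invertible_det_nz by force

lemma posdef_matrix_inv:
  fixes X :: "real^'n^'n"
  assumes X: "posdef X"
  shows "posdef (matrix_inv X)"
  unfolding posdef_def
proof (intro conjI allI impI)
  have inv: "invertible X"
    using X by (rule posdef_invertible)
  show "transpose (matrix_inv X) = matrix_inv X"
    using matrix_inv_transpose[OF inv] X by (simp add: posdef_def)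
  fix z :: "real^'n" assume "z \<noteq> 0"
  moreover have "X *v (matrix_inv X *v z) = z"
    by (simp add: matrix_vector_mul_assoc matrix_inv_right[OF inv])
  ultimately have "matrix_inv X *v z \<noteq> 0"
    by auto
  hence "(matrix_inv X *v z) \<bullet> (X *v (matrix_inv X *v z)) > 0"
    using X by (simp add: posdef_def)
  thus "z \<bullet> (matrix_inv X *v z) > 0"
    using \<open>X *v (matrix_inv X *v z) = z\<close> by (simp add: inner_commute)
qed

lemma det_le_det_exp_trace:
  fixes X P Q :: "real^'n^'n"
  assumes X: "posdef X" and P: "posdef P"
    and le: "\<And>u. u \<bullet> (P *v u) \<le> u \<bullet> ((X + Q) *v u)"
  shows "det P \<le> det X * exp (trace (matrix_inv X ** Q))"
proof -
  have "transpose P = P"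
    using P by (simp add: posdef_def)
  then obtain F :: "real^'n^'n" where F: "transpose F ** X ** F = mat 1"
    and diag: "\<And>i k. i \<noteq> k \<Longrightarrow> (transpose F ** P ** F) $ i $ k = 0"
    using simultaneous_diagonalization X by blast
  define f where "f k = column k F" for k
  have fX: "f k \<bullet> (X *v f k) = 1" for k
    using arg_cong[OF F, of "\<lambda>M. M $ k $ k"] by (simp add: f_def transpose_mult_entry mat_def)
  have "(X ** F) ** transpose F = mat 1"
    using F matrix_left_right_inverse by (metis matrix_mul_assoc)
  hence X_inv: "matrix_inv X = F ** transpose F"
    by (simp add: matrix_inv_unique matrix_mul_assoc)
  have "det P = det X * (\<Prod>k\<in>UNIV. f k \<bullet> (P *v f k))"
    using det_congruence[OF F, of P] det_diagonal[OF diag] by (simp add: f_def transpose_mult_entry)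
  also have "\<dots> \<le> det X * (\<Prod>k\<in>UNIV. exp (f k \<bullet> (Q *v f k)))"
  proof (intro mult_left_mono prod_mono conjI)
    show "0 \<le> det X"
      using posdef_det_pos[OF X] by simp
    fix k
    have "f k \<noteq> 0"
      using fX[of k] by auto
    thus "0 \<le> f k \<bullet> (P *v f k)"
      using P by (simp add: posdef_def less_imp_le)
    have "f k \<bullet> (P *v f k) \<le> 1 + f k \<bullet> (Q *v f k)"
      using le[of "f k"] fX by (simp add: matrix_vector_mult_add_rdistrib inner_add_right)
    thus "f k \<bullet> (P *v f k) \<le> exp (f k \<bullet> (Q *v f k))"
      using exp_ge_add_one_self[of "f k \<bullet> (Q *v f k)"] by linarith
  qed
  also have "(\<Prod>k\<in>UNIV. exp (f k \<bullet> (Q *v f k))) = exp (trace (matrix_inv X ** Q))"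
  proof -
    have "trace (matrix_inv X ** Q) = trace (transpose F ** Q ** F)"
      unfolding X_inv by (metis matrix_mul_assoc trace_mul_sym)
    thus ?thesis
      by (simp add: exp_sum trace_def transpose_mult_entry f_def)
  qed
  finally show ?thesis .
qed

section \<open>Continuity of matrix operations\<close>

lemma tendsto_matrix_mult [tendsto_intros]:
  fixes X :: "'a \<Rightarrow> real^'n^'m" and Y :: "'a \<Rightarrow> real^'p^'n"
  assumes "(X \<longlongrightarrow> X0) F" and "(Y \<longlongrightarrow> Y0) F"
  shows "((\<lambda>t. X t ** Y t) \<longlongrightarrow> X0 ** Y0) F"
  unfolding matrix_matrix_mult_def by (intro tendsto_intros assms)

lemma tendsto_det [tendsto_intros]:
  fixes X :: "'a \<Rightarrow> real^'n^'n"
  assumes "(X \<longlongrightarrow> X0) F"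
  shows "((\<lambda>t. det (X t)) \<longlongrightarrow> det X0) F"
  unfolding det_def by (intro tendsto_intros assms)

lemma matrix_inv_entry_cramer:
  fixes Y :: "real^'n^'n"
  assumes "det Y \<noteq> 0"
  shows "matrix_inv Y $ a $ b = det (\<chi> r c. if c = a then axis b 1 $ r else Y $ r $ c) / det Y"
proof -
  have "Y *v (matrix_inv Y *v axis b 1) = axis b 1"
    using assms invertible_det_nz matrix_inv_vector_cancel by blast
  hence "(matrix_inv Y *v axis b 1) $ a = det (\<chi> r c. if c = a then axis b 1 $ r else Y $ r $ c) / det Y"
    using cramer[OF assms] by simp
  thus ?thesis
    by (simp add: matrix_vector_mult_def axis_def mult_delta_right)
qed

lemma tendsto_matrix_inv:
  fixes X :: "'a \<Rightarrow> real^'n^'n"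
  assumes lim: "(X \<longlongrightarrow> X0) F" and det: "det X0 \<noteq> 0"
  shows "((\<lambda>t. matrix_inv (X t)) \<longlongrightarrow> matrix_inv X0) F"
proof -
  define N where "N a b Y = (\<chi> r c. if c = a then axis b 1 $ r else Y $ r $ c)"
    for a b and Y :: "real^'n^'n"
  have "((\<lambda>t. N a b (X t)) \<longlongrightarrow> N a b X0) F" for a b
    unfolding N_def by (intro tendsto_vec_lambda) (auto intro!: tendsto_vec_nth lim)
  hence "((\<lambda>t. \<chi> a b. det (N a b (X t)) / det (X t)) \<longlongrightarrow> (\<chi> a b. det (N a b X0) / det X0)) F"
    by (intro tendsto_intros lim det)
  moreover have "\<forall>\<^sub>F t in F. (\<chi> a b. det (N a b (X t)) / det (X t)) = matrix_inv (X t)"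
    using tendsto_imp_eventually_ne[OF tendsto_det[OF lim] det]
    by eventually_elim (simp add: vec_eq_iff N_def matrix_inv_entry_cramer)
  ultimately show ?thesis
    using det by (simp add: vec_eq_iff N_def matrix_inv_entry_cramer[symmetric] tendsto_cong)
qed

section \<open>Diagonal matrices and designs\<close>

lemma diag_mat_mult_vec: "diag_mat v *v x = (\<chi> i. v $ i * x $ i)"
  by (simp add: diag_mat_def matrix_vector_mult_def vec_eq_iff if_distrib if_distribR cong: if_cong)

lemma transpose_diag_mat: "transpose (diag_mat v) = diag_mat v"
  by (simp add: diag_mat_def transpose_def vec_eq_iff)

lemma diag_mat_mult: "diag_mat u ** diag_mat v = diag_mat (\<chi> i. u $ i * v $ i)"
  by (simp add: diag_mat_def matrix_matrix_mult_def vec_eq_iff mult_delta_left mult_delta_right)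

lemma inner_diag_mat: "x \<bullet> (diag_mat v *v x) = (\<Sum>i\<in>UNIV. v $ i * (x $ i)\<^sup>2)"
  by (simp add: diag_mat_mult_vec inner_vec_def power2_eq_square mult_ac)

lemma trace_diag_mat_mult: "trace (diag_mat v ** B) = (\<Sum>i\<in>UNIV. v $ i * B $ i $ i)"
  by (simp add: trace_def diag_mat_def matrix_matrix_mult_def if_distrib if_distribR cong: if_cong)

lemma tendsto_diag_mat [tendsto_intros]:
  assumes "(v \<longlongrightarrow> v0) F"
  shows "((\<lambda>t. diag_mat (v t)) \<longlongrightarrow> diag_mat v0) F"
  unfolding diag_mat_def by (intro tendsto_vec_lambda) (auto intro: tendsto_vec_nth assms)

lemma M0_sqrt_mult_M0_sqrt: "(\<forall>i. xi $ i \<ge> 0) \<Longrightarrow> M0_sqrt xi ** M0_sqrt xi = M0 xi"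
  by (simp add: M0_sqrt_def M0_def diag_mat_mult)

lemma transpose_M0_sqrt: "transpose (M0_sqrt xi) = M0_sqrt xi"
  by (simp add: M0_sqrt_def transpose_diag_mat)

lemma transpose_M0: "transpose (M0 xi) = M0 xi"
  by (simp add: M0_def transpose_diag_mat)

lemma M0_sqrt_completed_square:
  assumes nonneg: "\<forall>i. xi $ i \<ge> 0"
  shows "2 * ((M0_sqrt xi *v z) \<bullet> y) - z \<bullet> z \<le> (\<Sum>i\<in>UNIV. xi $ i * (y $ i)\<^sup>2)"
proof -
  have "(\<Sum>i\<in>UNIV. (sqrt (xi $ i) * y $ i - z $ i)\<^sup>2)
      = (\<Sum>i\<in>UNIV. xi $ i * (y $ i)\<^sup>2 - 2 * (sqrt (xi $ i) * z $ i * y $ i) + z $ i * z $ i)"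
    using nonneg by (intro sum.cong refl)
      (simp add: power2_diff power_mult_distrib mult_ac power2_eq_square[of "z $ _"])
  also have "\<dots> = (\<Sum>i\<in>UNIV. xi $ i * (y $ i)\<^sup>2) - 2 * ((M0_sqrt xi *v z) \<bullet> y) + z \<bullet> z"
    by (simp add: sum.distrib sum_subtractf sum_distrib_left M0_sqrt_def diag_mat_mult_vec inner_vec_def)
  finally show ?thesis
    using sum_nonneg[of UNIV "\<lambda>i. (sqrt (xi $ i) * y $ i - z $ i)\<^sup>2"] by simp
qed

lemma span_columns_M0:
  fixes xi :: "real^'j"
  shows "span (columns (M0 xi)) = {v. \<forall>i. xi $ i = 0 \<longrightarrow> v $ i = 0}"
proof
  let ?T = "{v :: real^'j. \<forall>i. xi $ i = 0 \<longrightarrow> v $ i = 0}"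
  have "subspace ?T"
    by (auto simp: subspace_def)
  moreover have "columns (M0 xi) \<subseteq> ?T"
    by (auto simp: columns_def column_def M0_def diag_mat_def)
  ultimately show "span (columns (M0 xi)) \<subseteq> ?T"
    by (rule span_minimal[rotated])
  show "?T \<subseteq> span (columns (M0 xi))"
  proof
    fix v assume v: "v \<in> ?T"
    have "v $ i *\<^sub>R axis i 1 \<in> span (columns (M0 xi))" for i
    proof (cases "xi $ i = 0")
      case False
      hence "axis i 1 = (1 / xi $ i) *\<^sub>R column i (M0 xi)"
        by (auto simp: vec_eq_iff axis_def column_def M0_def diag_mat_def)
      moreover have "column i (M0 xi) \<in> columns (M0 xi)"
        by (auto simp: columns_def)
      ultimately show ?thesis
        by (simp add: span_base span_scale)
    qed (use v span_zero in simp)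
    hence "(\<Sum>i\<in>UNIV. v $ i *\<^sub>R axis i 1) \<in> span (columns (M0 xi))"
      by (intro span_sum) auto
    thus "v \<in> span (columns (M0 xi))"
      using basis_expansion[of v] by (simp add: scalar_mult_eq_scaleR)
  qed
qed

lemma estimable_iff:
  fixes A :: "real^'p^'j"
  shows "estimable A xi \<longleftrightarrow> rank A = CARD('p) \<and> (\<forall>i k. xi $ i = 0 \<longrightarrow> A $ i $ k = 0)"
proof -
  have "columns A \<subseteq> S \<longleftrightarrow> (\<forall>k. column k A \<in> S)" for S
    by (auto simp: columns_def)
  thus ?thesis
    unfolding estimable_def span_columns_M0 by (auto simp: column_def)
qed

section \<open>The information matrix\<close>

locale covariance_model =
  fixes s2 :: real and Sig :: "real^'j^'j"
  assumes noise_pos: "s2 > 0"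
    and Sig_sym: "transpose Sig = Sig"
    and Sig_psd: "\<And>x. x \<bullet> (Sig *v x) \<ge> 0"
begin

definition scaled_cov :: "real^'j \<Rightarrow> real^'j^'j" where
  "scaled_cov xi = s2 *\<^sub>R mat 1 + M0_sqrt xi ** Sig ** M0_sqrt xi"

definition weight :: "real^'j \<Rightarrow> real^'j^'j" where
  "weight xi = M0_sqrt xi ** matrix_inv (scaled_cov xi) ** M0_sqrt xi"

definition cov_factor :: "real^'j \<Rightarrow> real^'j^'j" where
  "cov_factor xi = s2 *\<^sub>R mat 1 + Sig ** M0 xi"

lemma M_beta_eq_weight: "M_beta s2 Sig A xi = transpose A ** weight xi ** A"
  by (simp add: M_beta_def weight_def scaled_cov_def matrix_mul_assoc)

lemma scaled_cov_form:
  "u \<bullet> (scaled_cov xi *v u) = s2 * (u \<bullet> u) + (M0_sqrt xi *v u) \<bullet> (Sig *v (M0_sqrt xi *v u))"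
  using quadratic_form_congruence[of u "M0_sqrt xi" Sig]
  by (simp add: scaled_cov_def matrix_vector_mult_add_rdistrib scaleR_mat_one_vector transpose_M0_sqrt
      inner_add_right)

lemma posdef_scaled_cov: "posdef (scaled_cov xi)"
  unfolding posdef_def
proof (intro conjI allI impI)
  show "transpose (scaled_cov xi) = scaled_cov xi"
    by (simp add: scaled_cov_def transpose_add transpose_scalar matrix_transpose_mul
        transpose_M0_sqrt Sig_sym matrix_mul_assoc)
  fix u :: "real^'j" assume "u \<noteq> 0"
  thus "u \<bullet> (scaled_cov xi *v u) > 0"
    unfolding scaled_cov_form using noise_pos Sig_psd by (simp add: add_pos_nonneg)
qed

lemma weight_form:
  "x \<bullet> (weight xi *v x) = (M0_sqrt xi *v x) \<bullet> (matrix_inv (scaled_cov xi) *v (M0_sqrt xi *v x))"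
  using quadratic_form_congruence[of x "M0_sqrt xi" "matrix_inv (scaled_cov xi)"]
  by (simp add: weight_def transpose_M0_sqrt)

lemma transpose_weight: "transpose (weight xi) = weight xi"
  using posdef_matrix_inv[OF posdef_scaled_cov]
  by (simp add: weight_def matrix_transpose_mul transpose_M0_sqrt posdef_def matrix_mul_assoc)

lemma cov_factor_invertible:
  assumes nonneg: "\<forall>i. xi $ i \<ge> 0"
  shows "invertible (cov_factor xi)"
proof (rule invertible_if_inj)
  have "y = 0" if "cov_factor xi *v y = 0" for y
  proof -
    let ?m = "M0 xi *v y"
    have y_eq: "s2 *\<^sub>R y = - (Sig *v ?m)"
      using that by (simp add: cov_factor_def matrix_vector_mult_add_rdistrib scaleR_mat_one_vector
          matrix_vector_mul_assoc eq_neg_iff_add_eq_0)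
    have "s2 * (\<Sum>i\<in>UNIV. xi $ i * (y $ i)\<^sup>2) = (s2 *\<^sub>R y) \<bullet> ?m"
      by (simp add: M0_def inner_diag_mat)
    also have "\<dots> = - (?m \<bullet> (Sig *v ?m))"
      by (simp add: y_eq inner_commute)
    finally have "s2 * (\<Sum>i\<in>UNIV. xi $ i * (y $ i)\<^sup>2) \<le> 0"
      using Sig_psd[of ?m] by linarith
    hence "(\<Sum>i\<in>UNIV. xi $ i * (y $ i)\<^sup>2) = 0"
      using noise_pos nonneg by (simp add: mult_le_0_iff sum_nonneg antisym)
    hence "xi $ i * (y $ i)\<^sup>2 = 0" for i
      using nonneg by (simp add: sum_nonneg_eq_0_iff)
    hence "?m = 0"
      by (simp add: M0_def diag_mat_mult_vec vec_eq_iff power2_eq_square)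
    thus "y = 0"
      using y_eq noise_pos by simp
  qed
  thus "inj ((*v) (cov_factor xi))"
    using linear_inj_iff_eq_0[OF matrix_vector_mul_linear] by blast
qed

lemma weight_eq:
  assumes nonneg: "\<forall>i. xi $ i \<ge> 0"
  shows "weight xi = M0 xi ** matrix_inv (cov_factor xi)"
proof -
  let ?D = "M0_sqrt xi" and ?B = "scaled_cov xi"
  have scalar: "(s2 *\<^sub>R mat 1) ** ?D = s2 *\<^sub>R ?D" "?D ** (s2 *\<^sub>R mat 1) = s2 *\<^sub>R ?D"
    by (simp_all add: scalar_matrix_assoc[symmetric] matrix_scalar_ac)
  have "?D ** cov_factor xi = s2 *\<^sub>R ?D + ?D ** Sig ** ?D ** ?D"
    by (simp add: cov_factor_def matrix_add_ldistrib scalar M0_sqrt_mult_M0_sqrt[OF nonneg, symmetric]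
        matrix_mul_assoc)
  also have "\<dots> = ?B ** ?D"
    by (simp add: scaled_cov_def matrix_add_rdistrib scalar)
  finally have "?D ** cov_factor xi = ?B ** ?D" .
  hence "weight xi ** cov_factor xi = ?D ** (matrix_inv ?B ** ?B) ** ?D"
    unfolding weight_def by (metis matrix_mul_assoc)
  also have "\<dots> = M0 xi"
    using matrix_inv_left[OF posdef_invertible[OF posdef_scaled_cov]] M0_sqrt_mult_M0_sqrt[OF nonneg]
    by simp
  finally have "weight xi ** cov_factor xi ** matrix_inv (cov_factor xi) = M0 xi ** matrix_inv (cov_factor xi)"
    by simp
  thus ?thesis
    by (metis matrix_mul_assoc matrix_mul_rid matrix_inv_right[OF cov_factor_invertible[OF nonneg]])
qed

lemma weight_form_le:
  assumes nonneg: "\<forall>i. xi $ i \<ge> 0" and x: "x = s2 *\<^sub>R y + Sig *v m"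
  shows "x \<bullet> (weight xi *v x) \<le> s2 * (\<Sum>i\<in>UNIV. xi $ i * (y $ i)\<^sup>2) + m \<bullet> (Sig *v m)"
proof -
  let ?D = "M0_sqrt xi" and ?B = "scaled_cov xi"
  define z where "z = matrix_inv ?B *v (?D *v x)"
  define w where "w = ?D *v z"
  have Bz: "?B *v z = ?D *v x"
    by (simp add: z_def matrix_inv_vector_cancel posdef_invertible[OF posdef_scaled_cov])
  have D_inner: "(?D *v a) \<bullet> b = a \<bullet> (?D *v b)" for a b
    by (metis inner_transpose_vector transpose_M0_sqrt)
  have "x \<bullet> (weight xi *v x) = z \<bullet> (?B *v z)"
    unfolding Bz by (simp add: weight_form z_def inner_commute)
  hence form: "x \<bullet> (weight xi *v x) = s2 * (z \<bullet> z) + w \<bullet> (Sig *v w)"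
    by (simp add: scaled_cov_form w_def)
  have "z \<bullet> (?B *v z) = w \<bullet> x"
    by (simp add: Bz w_def D_inner)
  hence lin: "s2 * (z \<bullet> z) + w \<bullet> (Sig *v w) = s2 * (w \<bullet> y) + w \<bullet> (Sig *v m)"
    by (simp add: scaled_cov_form w_def x inner_add_right)
  \<comment> \<open>hence x \<bullet> W x = s2 (2 w \<bullet> y - z \<bullet> z) + (2 w \<bullet> Sig m - w \<bullet> Sig w);
    completing both squares bounds the two terms\<close>
  have "0 \<le> (m - w) \<bullet> (Sig *v (m - w))"
    by (rule Sig_psd)
  hence Sig_part: "2 * (w \<bullet> (Sig *v m)) - w \<bullet> (Sig *v w) \<le> m \<bullet> (Sig *v m)"
    using symmetric_form_commute[OF Sig_sym, of w m]
    by (simp add: matrix_vector_mult_diff_distrib inner_diff_left inner_diff_right)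
  have "2 * (w \<bullet> y) - z \<bullet> z \<le> (\<Sum>i\<in>UNIV. xi $ i * (y $ i)\<^sup>2)"
    unfolding w_def by (rule M0_sqrt_completed_square[OF nonneg])
  hence "s2 * (2 * (w \<bullet> y) - z \<bullet> z) \<le> s2 * (\<Sum>i\<in>UNIV. xi $ i * (y $ i)\<^sup>2)"
    using noise_pos by (simp add: mult_left_mono)
  thus ?thesis
    using form lin Sig_part by (simp add: algebra_simps)
qed

lemma weight_form_eq:
  assumes nonneg: "\<forall>i. xi $ i \<ge> 0" and x: "x = cov_factor xi *v y"
  shows "x \<bullet> (weight xi *v x) =
    s2 * (\<Sum>i\<in>UNIV. xi $ i * (y $ i)\<^sup>2) + (M0 xi *v y) \<bullet> (Sig *v (M0 xi *v y))"
proof -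
  let ?m = "M0 xi *v y"
  have "weight xi *v x = ?m"
    by (simp add: x weight_eq[OF nonneg] matrix_vector_mul_assoc[symmetric]
        matrix_inv_vector_cancel cov_factor_invertible[OF nonneg])
  moreover have "x = s2 *\<^sub>R y + Sig *v ?m"
    by (simp add: x cov_factor_def matrix_vector_mult_add_rdistrib scaleR_mat_one_vector
        matrix_vector_mul_assoc)
  ultimately have "x \<bullet> (weight xi *v x) = s2 * (y \<bullet> ?m) + ?m \<bullet> (Sig *v ?m)"
    by (simp add: inner_add_right inner_commute)
  thus ?thesis
    by (simp add: M0_def inner_diag_mat)
qed

lemma weight_tangent_le:
  assumes nonneg0: "\<forall>i. xi0 $ i \<ge> 0" and nonneg: "\<forall>i. xi $ i \<ge> 0"
  shows "x \<bullet> (weight xi *v x) \<le> x \<bullet> (weight xi0 *v x)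
    + s2 * (\<Sum>i\<in>UNIV. (xi $ i - xi0 $ i) * ((matrix_inv (cov_factor xi0) *v x) $ i)\<^sup>2)"
proof -
  define y where "y = matrix_inv (cov_factor xi0) *v x"
  have x: "x = cov_factor xi0 *v y"
    by (simp add: y_def matrix_inv_vector_cancel cov_factor_invertible[OF nonneg0])
  hence "x = s2 *\<^sub>R y + Sig *v (M0 xi0 *v y)"
    by (simp add: cov_factor_def matrix_vector_mult_add_rdistrib scaleR_mat_one_vector matrix_vector_mul_assoc)
  from weight_form_le[OF nonneg this] weight_form_eq[OF nonneg0 x] show ?thesis
    by (simp add: y_def[symmetric] sum_subtractf algebra_simps)
qed

lemma posdef_M_beta:
  fixes A :: "real^'p^'j"
  assumes est: "estimable A xi" and nonneg: "\<forall>i. xi $ i \<ge> 0"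
  shows "posdef (M_beta s2 Sig A xi)"
  unfolding posdef_def
proof (intro conjI allI impI)
  show "transpose (M_beta s2 Sig A xi) = M_beta s2 Sig A xi"
    by (simp add: M_beta_eq_weight matrix_transpose_mul transpose_weight matrix_mul_assoc)
  fix u :: "real^'p" assume "u \<noteq> 0"
  have rows: "\<And>i k. xi $ i = 0 \<Longrightarrow> A $ i $ k = 0" and "inj ((*v) A)"
    using est by (simp_all add: estimable_iff full_rank_injective)
  hence "A *v u \<noteq> 0"
    using \<open>u \<noteq> 0\<close> by (metis inj_eq matrix_vector_mult_0_right)
  then obtain i where i: "(A *v u) $ i \<noteq> 0"
    by (metis vec_eq_iff zero_index)
  have "xi $ i \<noteq> 0"
  proof
    assume "xi $ i = 0"
    hence "(A *v u) $ i = 0"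
      by (simp add: rows matrix_vector_mult_def)
    with i show False ..
  qed
  hence "(M0_sqrt xi *v (A *v u)) $ i \<noteq> 0"
    using i nonneg by (simp add: M0_sqrt_def diag_mat_mult_vec)
  hence "M0_sqrt xi *v (A *v u) \<noteq> 0"
    by auto
  thus "u \<bullet> (M_beta s2 Sig A xi *v u) > 0"
    using posdef_matrix_inv[OF posdef_scaled_cov]
    by (simp add: M_beta_eq_weight quadratic_form_congruence weight_form posdef_def)
qed

lemma transpose_cov_factor: "transpose (cov_factor xi) = s2 *\<^sub>R mat 1 + M0 xi ** Sig"
  by (simp add: cov_factor_def transpose_add transpose_scalar matrix_transpose_mul transpose_M0 Sig_sym)

lemma psi_eq:
  fixes A :: "real^'p^'j"
  assumes nonneg: "\<forall>i. xi $ i \<ge> 0"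
  defines "G \<equiv> matrix_inv (cov_factor xi) ** A"
  shows "psi s2 Sig A xi j = (G ** matrix_inv (M_beta s2 Sig A xi) ** transpose G) $ j $ j"
proof -
  have "matrix_inv (s2 *\<^sub>R mat 1 + M0 xi ** Sig) = transpose (matrix_inv (cov_factor xi))"
    using matrix_inv_transpose[OF cov_factor_invertible[OF nonneg]] by (simp add: transpose_cov_factor)
  thus ?thesis
    by (simp add: psi_def G_def cov_factor_def matrix_transpose_mul matrix_mul_assoc)
qed

lemma det_M_beta_le:
  fixes A :: "real^'p^'j"
  assumes est0: "estimable A xi0" and nonneg0: "\<forall>i. xi0 $ i \<ge> 0"
    and est: "estimable A xi" and nonneg: "\<forall>i. xi $ i \<ge> 0"
  shows "det (M_beta s2 Sig A xi) \<le> det (M_beta s2 Sig A xi0) *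
    exp (s2 * (\<Sum>i\<in>UNIV. (xi $ i - xi0 $ i) * psi s2 Sig A xi0 i))"
proof -
  define G where "G = matrix_inv (cov_factor xi0) ** A"
  define \<Delta> where "\<Delta> = diag_mat (\<chi> i. s2 * (xi $ i - xi0 $ i))"
  have "u \<bullet> (M_beta s2 Sig A xi *v u) \<le>
      u \<bullet> ((M_beta s2 Sig A xi0 + transpose G ** \<Delta> ** G) *v u)" for u
  proof -
    have "u \<bullet> ((transpose G ** \<Delta> ** G) *v u)
        = s2 * (\<Sum>i\<in>UNIV. (xi $ i - xi0 $ i) * ((matrix_inv (cov_factor xi0) *v (A *v u)) $ i)\<^sup>2)"
      unfolding quadratic_form_congruence
      by (simp add: \<Delta>_def inner_diag_mat G_def matrix_vector_mul_assoc[symmetric]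
          sum_distrib_left mult.assoc)
    thus ?thesis
      using weight_tangent_le[OF nonneg0 nonneg, of "A *v u"]
      by (simp add: M_beta_eq_weight quadratic_form_congruence matrix_vector_mult_add_rdistrib inner_add_right)
  qed
  hence "det (M_beta s2 Sig A xi) \<le>
      det (M_beta s2 Sig A xi0) * exp (trace (matrix_inv (M_beta s2 Sig A xi0) ** (transpose G ** \<Delta> ** G)))"
    by (intro det_le_det_exp_trace posdef_M_beta assms)
  also have "trace (matrix_inv (M_beta s2 Sig A xi0) ** (transpose G ** \<Delta> ** G))
      = trace (\<Delta> ** (G ** matrix_inv (M_beta s2 Sig A xi0) ** transpose G))"
    by (metis matrix_mul_assoc trace_mul_sym)
  also have "\<dots> = s2 * (\<Sum>i\<in>UNIV. (xi $ i - xi0 $ i) * psi s2 Sig A xi0 i)"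
    by (simp add: \<Delta>_def trace_diag_mat_mult psi_eq[OF nonneg0] G_def sum_distrib_left mult.assoc)
  finally show ?thesis .
qed

lemma tendsto_psi:
  fixes A :: "real^'p^'j"
  assumes lim: "(xi \<longlongrightarrow> xs) F" and est: "estimable A xs" and nonneg: "\<forall>i. xs $ i \<ge> 0"
  shows "((\<lambda>t. psi s2 Sig A (xi t) j) \<longlongrightarrow> psi s2 Sig A xs j) F"
proof -
  have M0: "((\<lambda>t. M0 (xi t)) \<longlongrightarrow> M0 xs) F"
    unfolding M0_def by (intro tendsto_intros lim)
  have M0_sqrt: "((\<lambda>t. M0_sqrt (xi t)) \<longlongrightarrow> M0_sqrt xs) F"
    unfolding M0_sqrt_def by (intro tendsto_intros tendsto_vec_lambda tendsto_real_sqrt tendsto_vec_nth lim)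
  have "((\<lambda>t. scaled_cov (xi t)) \<longlongrightarrow> scaled_cov xs) F"
    unfolding scaled_cov_def by (intro tendsto_intros M0_sqrt)
  moreover have "det (scaled_cov xs) \<noteq> 0"
    using posdef_det_pos[OF posdef_scaled_cov, of xs] by simp
  ultimately have "((\<lambda>t. M_beta s2 Sig A (xi t)) \<longlongrightarrow> M_beta s2 Sig A xs) F"
    unfolding M_beta_def scaled_cov_def[symmetric] by (intro tendsto_intros tendsto_matrix_inv M0_sqrt)
  moreover have "det (M_beta s2 Sig A xs) \<noteq> 0"
    using posdef_det_pos[OF posdef_M_beta[OF est nonneg]] by simp
  moreover have "det (cov_factor xs) \<noteq> 0" and "det (transpose (cov_factor xs)) \<noteq> 0"
    using cov_factor_invertible[OF nonneg] invertible_det_nz by auto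
  ultimately show ?thesis
    unfolding psi_def
    by (intro tendsto_intros tendsto_matrix_inv M0)
       (simp_all add: cov_factor_def[symmetric] transpose_cov_factor[symmetric])
qed

lemma D_optimal_if_psi_const:
  fixes A :: "real^'p^'j"
  assumes des: "is_design I xs" and est: "estimable A xs"
    and const: "\<And>j k. psi s2 Sig A xs j = psi s2 Sig A xs k"
  shows "locally_D_optimal s2 Sig A I xs"
  unfolding locally_D_optimal_def
proof (intro conjI allI impI des est)
  fix xi assume "is_design I xi \<and> estimable A xi"
  hence nonneg: "\<forall>i. xi $ i \<ge> 0" and sum_xi: "(\<Sum>i\<in>UNIV. xi $ i) = I" and est_xi: "estimable A xi"
    by (auto simp: is_design_def)
  have nonneg_xs: "\<forall>i. xs $ i \<ge> 0" and sum_xs: "(\<Sum>i\<in>UNIV. xs $ i) = I"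
    using des by (auto simp: is_design_def)
  fix j0 :: 'j
  have "(\<Sum>i\<in>UNIV. (xi $ i - xs $ i) * psi s2 Sig A xs i) =
      (\<Sum>i\<in>UNIV. (xi $ i - xs $ i) * psi s2 Sig A xs j0)"
    by (rule sum.cong) (auto intro: const)
  also have "\<dots> = (\<Sum>i\<in>UNIV. xi $ i - xs $ i) * psi s2 Sig A xs j0"
    by (rule sum_distrib_right[symmetric])
  also have "\<dots> = 0"
    by (simp add: sum_subtractf sum_xi sum_xs)
  finally have "det (M_beta s2 Sig A xi) \<le> det (M_beta s2 Sig A xs)"
    using det_M_beta_le[OF est nonneg_xs est_xi nonneg] by simp
  thus "ln (det (M_beta s2 Sig A xi)) \<le> ln (det (M_beta s2 Sig A xs))"
    using posdef_det_pos[OF posdef_M_beta[OF est_xi nonneg]] by simp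
qed

lemma psi_le_at_shifted_design:
  fixes A :: "real^'p^'j"
  assumes opt: "locally_D_optimal s2 Sig A I xs" and "j \<noteq> k" and t: "0 < t" "t < xs $ k"
  defines "xi \<equiv> xs + t *\<^sub>R (axis j 1 - axis k 1)"
  shows "psi s2 Sig A xi j \<le> psi s2 Sig A xi k"
proof -
  have des: "is_design I xs" and est: "estimable A xs"
    using opt by (simp_all add: locally_D_optimal_def)
  hence nonneg: "\<forall>i. xs $ i \<ge> 0"
    by (simp add: is_design_def)
  have xi_entry: "xi $ i = (if i = j then xs $ i + t else if i = k then xs $ i - t else xs $ i)" for i
    using \<open>j \<noteq> k\<close> by (simp add: xi_def axis_def)
  have nonneg_xi: "\<forall>i. xi $ i \<ge> 0"
    using nonneg t by (simp add: xi_entry)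
  have "(\<Sum>i\<in>UNIV. xi $ i) = (\<Sum>i\<in>UNIV. xs $ i) + t * (\<Sum>i\<in>UNIV. (axis j 1 - axis k 1) $ i)"
    by (simp add: xi_def sum.distrib sum_distrib_left)
  hence des_xi: "is_design I xi"
    using des nonneg_xi by (simp add: is_design_def sum_subtractf axis_def)
  have "xs $ i = 0" if "xi $ i = 0" for i
    using that nonneg[rule_format, of i] t by (auto simp: xi_entry split: if_splits)
  hence est_xi: "estimable A xi"
    using est by (auto simp: estimable_iff)
  let ?f = "psi s2 Sig A xi j - psi s2 Sig A xi k"
  \<comment> \<open>the tangent bound at xi, evaluated at xs\<close>
  have "(\<Sum>i\<in>UNIV. (xs $ i - xi $ i) * psi s2 Sig A xi i) = - t * ?f"
    by (simp add: xi_def algebra_simps sum_subtractf sum_distrib_left[symmetric] mult_delta_left axis_def)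
  hence "det (M_beta s2 Sig A xs) \<le> det (M_beta s2 Sig A xi) * exp (- (s2 * t * ?f))"
    using det_M_beta_le[OF est_xi nonneg_xi est nonneg] by (simp add: mult_ac)
  moreover have det_pos: "det (M_beta s2 Sig A xi) > 0" "det (M_beta s2 Sig A xs) > 0"
    using posdef_det_pos posdef_M_beta est_xi nonneg_xi est nonneg by blast+
  ultimately have "ln (det (M_beta s2 Sig A xs)) \<le> ln (det (M_beta s2 Sig A xi) * exp (- (s2 * t * ?f)))"
    by simp
  also have "\<dots> = ln (det (M_beta s2 Sig A xi)) - s2 * t * ?f"
    using det_pos by (simp add: ln_mult)
  moreover have "ln (det (M_beta s2 Sig A xi)) \<le> ln (det (M_beta s2 Sig A xs))"
    using opt des_xi est_xi by (simp add: locally_D_optimal_def)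
  ultimately have "s2 * t * ?f \<le> 0"
    by simp
  thus ?thesis
    using noise_pos t by (simp add: mult_le_0_iff)
qed

lemma psi_le_if_D_optimal:
  fixes A :: "real^'p^'j"
  assumes opt: "locally_D_optimal s2 Sig A I xs" and pos: "xs $ k > 0"
  shows "psi s2 Sig A xs j \<le> psi s2 Sig A xs k"
proof (cases "j = k")
  case False
  have est: "estimable A xs" and nonneg: "\<forall>i. xs $ i \<ge> 0"
    using opt by (simp_all add: locally_D_optimal_def is_design_def)
  define xi where "xi t = xs + t *\<^sub>R (axis j 1 - axis k 1)" for t :: real
  let ?f = "\<lambda>t. psi s2 Sig A (xi t) j - psi s2 Sig A (xi t) k"
  have ev: "\<forall>\<^sub>F t in at_right 0. ?f t \<le> 0"
    using psi_le_at_shifted_design[OF opt False] pos by (auto simp: eventually_at_right_field xi_def)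
  have "(xi \<longlongrightarrow> xs) (at_right 0)"
    unfolding xi_def by (rule tendsto_eq_intros) (auto intro!: tendsto_eq_intros)
  hence "(?f \<longlongrightarrow> psi s2 Sig A xs j - psi s2 Sig A xs k) (at_right 0)"
    by (intro tendsto_diff tendsto_psi est nonneg)
  from tendsto_upperbound[OF this ev] show ?thesis
    by simp
qed simp

end

theorem corollary1:
  fixes s2 I :: real and Sig :: "real^'j^'j" and A :: "real^'p^'j" and xs :: "real^'j"
  assumes "CARD('p) \<le> CARD('j)"
    and "s2 > 0" and "I > 0"
    and "transpose Sig = Sig" and "\<forall>x. x \<bullet> (Sig *v x) \<ge> 0"
    and "rank A = CARD('p)"
    and "is_design I xs" and "\<forall>j. xs $ j > 0"
  shows "locally_D_optimal s2 Sig A I xs \<longleftrightarrow>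
         (\<forall>j k. I * psi s2 Sig A xs j = I * psi s2 Sig A xs k)"
proof -
  interpret covariance_model s2 Sig
    using assms(2,4,5) by unfold_locales auto
  have est: "estimable A xs"
    using assms(6,8) by (simp add: estimable_iff less_le)
  show ?thesis
  proof
    assume "locally_D_optimal s2 Sig A I xs"
    thus "\<forall>j k. I * psi s2 Sig A xs j = I * psi s2 Sig A xs k"
      using psi_le_if_D_optimal assms(8) by (metis order_antisym)
  next
    assume "\<forall>j k. I * psi s2 Sig A xs j = I * psi s2 Sig A xs k"
    thus "locally_D_optimal s2 Sig A I xs"
      using D_optimal_if_psi_const[OF assms(7) est] assms(3) by simp
  qed
qed

end
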